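(* Let $n=n_{obs}+n_{mis}$ with $n_{obs}\ge2$, $n_{mis}\ge1$. Let $Y_1,\dots,Y_{n_{obs}}$ be i.i.d. $N(\mu,\sigma^2)$, with $\bar Y_{obs}$ their mean and $CSS=\sum_{i=1}^{n_{obs}}(Y_i-\bar Y_{obs})^2$. Fix a real constant $c_M$ with $n_{obs}-1+c_M>0$ and let $\hat\sigma^2_{obs,M}=CSS/(n_{obs}-1+c_M)$. For each $d=1,\dots,D$ ($D\ge1$) independently, draw $Y_{imp,i,d}=\bar Y_{obs}+\hat\sigma_{obs,M}Z_{imp,i,d}$ for $i=n_{obs}+1,\dots,n$ with $Z_{imp,i,d}$ i.i.d. $N(0,1)$ independent of the data, and let $\hat\mu_{SI,d}$ be the sample mean of the $n$ values $Y_1,\dots,Y_{n_{obs}},Y_{imp,n_{obs}+1,d},\dots,Y_{imp,n,d}$. Let $\hat\mu_{MI,M}=\frac1D\sum_{d=1}^D\hat\mu_{SI,d}$. Then $$\operatorname{Var}(\hat\mu_{MI,M})=\sigma^2\left(\frac1{n_{obs}}+\frac{n_{mis}(n_{obs}-1)}{Dn^2(c_M+n_{obs}-1)}\right).$$ *)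

theory Defs
  imports "HOL-Probability.Probability"
begin

text \<open>Observed data Y 1, ..., Y n_obs (1-based). Imputation noise Z (i,d) for
 i in {n_obs+1..n}, d in {1..D}, where n = n_obs + n_mis.\<close>

definition ybar_obs :: "nat \<Rightarrow> (nat \<Rightarrow> 'a \<Rightarrow> real) \<Rightarrow> 'a \<Rightarrow> real" where
  "ybar_obs n_obs Y \<omega> = (\<Sum>i=1..n_obs. Y i \<omega>) / real n_obs"

definition CSS :: "nat \<Rightarrow> (nat \<Rightarrow> 'a \<Rightarrow> real) \<Rightarrow> 'a \<Rightarrow> real" where
  "CSS n_obs Y \<omega> = (\<Sum>i=1..n_obs. (Y i \<omega> - ybar_obs n_obs Y \<omega>)^2)"

definition sigma2_hat_obs_M :: "nat \<Rightarrow> real \<Rightarrow> (nat \<Rightarrow> 'a \<Rightarrow> real) \<Rightarrow> 'a \<Rightarrow> real" where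
  "sigma2_hat_obs_M n_obs c_M Y \<omega> = CSS n_obs Y \<omega> / (real n_obs - 1 + c_M)"

definition Y_imp :: "nat \<Rightarrow> real \<Rightarrow> (nat \<Rightarrow> 'a \<Rightarrow> real) \<Rightarrow> (nat \<times> nat \<Rightarrow> 'a \<Rightarrow> real)
    \<Rightarrow> nat \<Rightarrow> nat \<Rightarrow> 'a \<Rightarrow> real" where
  "Y_imp n_obs c_M Y Z i d \<omega> =
     ybar_obs n_obs Y \<omega> + sqrt (sigma2_hat_obs_M n_obs c_M Y \<omega>) * Z (i, d) \<omega>"

definition mu_SI :: "nat \<Rightarrow> nat \<Rightarrow> real \<Rightarrow> (nat \<Rightarrow> 'a \<Rightarrow> real) \<Rightarrow> (nat \<times> nat \<Rightarrow> 'a \<Rightarrow> real)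
    \<Rightarrow> nat \<Rightarrow> 'a \<Rightarrow> real" where
  "mu_SI n_obs n_mis c_M Y Z d \<omega> =
     ((\<Sum>i=1..n_obs. Y i \<omega>) + (\<Sum>i=n_obs+1..n_obs+n_mis. Y_imp n_obs c_M Y Z i d \<omega>))
     / real (n_obs + n_mis)"

definition mu_MI_M :: "nat \<Rightarrow> nat \<Rightarrow> nat \<Rightarrow> real \<Rightarrow> (nat \<Rightarrow> 'a \<Rightarrow> real) \<Rightarrow> (nat \<times> nat \<Rightarrow> 'a \<Rightarrow> real)
    \<Rightarrow> 'a \<Rightarrow> real" where
  "mu_MI_M n_obs n_mis D c_M Y Z \<omega> = (\<Sum>d=1..D. mu_SI n_obs n_mis c_M Y Z d \<omega>) / real D"

end

theory Submission
  imports Defs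
begin

(*
  The estimator averages to mu_MI = ybar + sigma_hat / (n D) * T, where T is the sum of the
  n_mis * D imputation noises.  T has mean 0 and second moment n_mis * D and is independent of
  the observed sample, so the cross term vanishes and
    Var mu_MI = Var ybar + E[sigma_hat^2] * E[T^2] / (n D)^2,
  with Var ybar = sigma^2 / n_obs and E[sigma_hat^2] = (n_obs - 1) sigma^2 / (n_obs - 1 + c_M)
  since CSS is unbiased for (n_obs - 1) sigma^2.
*)

lemma integrable_mult_of_square_integrable:
  fixes f g :: "'a \<Rightarrow> real"
  assumes [measurable]: "f \<in> borel_measurable M" "g \<in> borel_measurable M"
    and "integrable M (\<lambda>x. f x ^ 2)" "integrable M (\<lambda>x. g x ^ 2)"
  shows "integrable M (\<lambda>x. f x * g x)"
proof (rule Bochner_Integration.integrable_bound)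
  show "integrable M (\<lambda>x. f x ^ 2 + g x ^ 2)" using assms by auto
  have "\<bar>f x * g x\<bar> \<le> f x ^ 2 + g x ^ 2" for x
    using sum_squares_bound[of "\<bar>f x\<bar>" "\<bar>g x\<bar>"] abs_ge_zero[of "f x * g x"]
    by (simp only: abs_mult power2_abs)
  then show "AE x in M. norm (f x * g x) \<le> norm (f x ^ 2 + g x ^ 2)" by simp
qed simp

lemma integrable_square_sum:
  fixes f :: "'i \<Rightarrow> 'a \<Rightarrow> real"
  assumes "\<And>i. i \<in> I \<Longrightarrow> f i \<in> borel_measurable M"
    and "\<And>i. i \<in> I \<Longrightarrow> integrable M (\<lambda>x. f i x ^ 2)"
  shows "integrable M (\<lambda>x. (\<Sum>i\<in>I. f i x) ^ 2)"
  using assms unfolding power2_eq_square sum_product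
  by (intro Bochner_Integration.integrable_sum integrable_mult_of_square_integrable)
     (auto simp: power2_eq_square)

lemma sum_squared_deviations:
  fixes a :: "'i \<Rightarrow> real"
  assumes "finite A" "A \<noteq> {}"
  shows "(\<Sum>i\<in>A. (a i - (\<Sum>j\<in>A. a j) / card A) ^ 2) = (\<Sum>i\<in>A. a i ^ 2) - (\<Sum>j\<in>A. a j) ^ 2 / card A"
proof -
  define S where "S = (\<Sum>j\<in>A. a j)"
  define N where "N = real (card A)"
  have "N > 0" using assms N_def by (simp add: card_gt_0_iff)
  have "(\<Sum>i\<in>A. (a i - S / N) ^ 2) = (\<Sum>i\<in>A. a i ^ 2 - 2 * (S / N) * a i + (S / N) ^ 2)"
    by (rule sum.cong) (simp_all add: power2_diff field_simps)
  also have "\<dots> = (\<Sum>i\<in>A. a i ^ 2) - 2 * (S / N) * S + N * (S / N) ^ 2"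
    by (simp add: sum.distrib sum_subtractf sum_distrib_left S_def N_def)
  also have "\<dots> = (\<Sum>i\<in>A. a i ^ 2) - S ^ 2 / N"
    using \<open>N > 0\<close> by (simp add: field_simps power2_eq_square)
  finally show ?thesis by (simp add: S_def N_def)
qed

lemma ybar_obs_minus:
  assumes "n > 0"
  shows "ybar_obs n Y \<omega> - \<mu> = (\<Sum>i=1..n. Y i \<omega> - \<mu>) / real n"
  using assms by (simp add: ybar_obs_def sum_subtractf field_simps)

lemma CSS_eq_centered:
  assumes "n > 0"
  shows "CSS n Y \<omega> = (\<Sum>i=1..n. (Y i \<omega> - \<mu>) ^ 2) - (\<Sum>i=1..n. Y i \<omega> - \<mu>) ^ 2 / real n"
proof -
  have "CSS n Y \<omega> = (\<Sum>i=1..n. ((Y i \<omega> - \<mu>) - (\<Sum>j=1..n. Y j \<omega> - \<mu>) / card {1..n}) ^ 2)"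
    using ybar_obs_minus[OF assms, of Y \<omega> \<mu>] by (simp add: CSS_def algebra_simps)
  also have "\<dots> = (\<Sum>i=1..n. (Y i \<omega> - \<mu>) ^ 2) - (\<Sum>i=1..n. Y i \<omega> - \<mu>) ^ 2 / real n"
    using assms by (subst sum_squared_deviations) auto
  finally show ?thesis .
qed

lemma sample_statistics_cong:
  assumes "\<And>i. i \<in> {1..n} \<Longrightarrow> Y i \<omega> = Y' i \<omega>'"
  shows "ybar_obs n Y \<omega> = ybar_obs n Y' \<omega>'" "CSS n Y \<omega> = CSS n Y' \<omega>'"
    "sigma2_hat_obs_M n c Y \<omega> = sigma2_hat_obs_M n c Y' \<omega>'"
proof -
  show ybar: "ybar_obs n Y \<omega> = ybar_obs n Y' \<omega>'"
    unfolding ybar_obs_def by (intro sum.cong refl arg_cong2[where f = "(/)"]) (simp only: assms)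
  show CSS: "CSS n Y \<omega> = CSS n Y' \<omega>'"
    unfolding CSS_def ybar by (intro sum.cong refl) (simp only: assms)
  show "sigma2_hat_obs_M n c Y \<omega> = sigma2_hat_obs_M n c Y' \<omega>'"
    unfolding sigma2_hat_obs_M_def CSS ..
qed

lemma borel_measurable_sample_statistics:
  assumes "\<And>i. i \<in> {1..n} \<Longrightarrow> Y i \<in> borel_measurable M"
  shows "ybar_obs n Y \<in> borel_measurable M" "CSS n Y \<in> borel_measurable M"
    "sigma2_hat_obs_M n c Y \<in> borel_measurable M"
proof -
  show ybar: "ybar_obs n Y \<in> borel_measurable M"
    unfolding ybar_obs_def[abs_def] using assms by (intro borel_measurable_divide borel_measurable_sum) auto
  show CSS: "CSS n Y \<in> borel_measurable M"
    unfolding CSS_def[abs_def] using assms ybar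
    by (intro borel_measurable_sum borel_measurable_power borel_measurable_diff) auto
  show "sigma2_hat_obs_M n c Y \<in> borel_measurable M"
    unfolding sigma2_hat_obs_M_def[abs_def] using CSS by (intro borel_measurable_divide) auto
qed

lemma mu_MI_M_eq:
  assumes "n_obs > 0" "D > 0"
  shows "mu_MI_M n_obs n_mis D c_M Y Z \<omega> = ybar_obs n_obs Y \<omega> +
    sqrt (sigma2_hat_obs_M n_obs c_M Y \<omega>) / (real (n_obs + n_mis) * real D) *
    (\<Sum>p\<in>{n_obs+1..n_obs+n_mis} \<times> {1..D}. Z p \<omega>)"
proof -
  define n where "n = real (n_obs + n_mis)"
  define s where "s = sqrt (sigma2_hat_obs_M n_obs c_M Y \<omega>)"
  define noise where "noise d = (\<Sum>i=n_obs+1..n_obs+n_mis. Z (i, d) \<omega>)" for d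
  have "n > 0" using assms by (simp add: n_def)
  have sum_obs: "(\<Sum>i=1..n_obs. Y i \<omega>) = real n_obs * ybar_obs n_obs Y \<omega>"
    using assms by (simp add: ybar_obs_def)
  have mu_SI: "mu_SI n_obs n_mis c_M Y Z d \<omega> = ybar_obs n_obs Y \<omega> + s * noise d / n" for d
  proof -
    have "(\<Sum>i=n_obs+1..n_obs+n_mis. Y_imp n_obs c_M Y Z i d \<omega>) = real n_mis * ybar_obs n_obs Y \<omega> + s * noise d"
      by (simp add: Y_imp_def sum.distrib noise_def sum_distrib_left s_def)
    then show ?thesis
      using \<open>n > 0\<close> unfolding mu_SI_def sum_obs by (simp add: n_def field_simps)
  qed
  have noise_total: "(\<Sum>d=1..D. noise d) = (\<Sum>p\<in>{n_obs+1..n_obs+n_mis} \<times> {1..D}. Z p \<omega>)"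
    unfolding noise_def by (subst sum.swap) (simp add: sum.cartesian_product)
  have "mu_MI_M n_obs n_mis D c_M Y Z \<omega> = (\<Sum>d=1..D. ybar_obs n_obs Y \<omega> + s * noise d / n) / real D"
    unfolding mu_MI_M_def mu_SI ..
  also have "\<dots> = (real D * ybar_obs n_obs Y \<omega> + s * (\<Sum>d=1..D. noise d) / n) / real D"
    by (simp add: sum.distrib sum_distrib_left sum_divide_distrib)
  also have "\<dots> = ybar_obs n_obs Y \<omega> + s / (n * real D) * (\<Sum>d=1..D. noise d)"
    using assms \<open>n > 0\<close> by (simp add: field_simps)
  finally show ?thesis
    unfolding noise_total s_def n_def .
qed

context prob_space
begin

lemma expectation_square_sum_indep:
  fixes X :: "'i \<Rightarrow> 'a \<Rightarrow> real"
  assumes "finite I" and [measurable]: "\<And>i. i \<in> I \<Longrightarrow> X i \<in> borel_measurable M"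
    and sq: "\<And>i. i \<in> I \<Longrightarrow> integrable M (\<lambda>x. X i x ^ 2)"
    and centered: "\<And>i. i \<in> I \<Longrightarrow> expectation (X i) = 0"
    and indep: "\<And>i j. i \<in> I \<Longrightarrow> j \<in> I \<Longrightarrow> i \<noteq> j \<Longrightarrow> indep_var borel (X i) borel (X j)"
  shows "expectation (\<lambda>x. (\<Sum>i\<in>I. X i x) ^ 2) = (\<Sum>i\<in>I. expectation (\<lambda>x. X i x ^ 2))"
proof -
  have products_integrable: "integrable M (\<lambda>x. X i x * X j x)" if "i \<in> I" "j \<in> I" for i j
    using that by (intro integrable_mult_of_square_integrable sq) auto
  have integrable: "integrable M (X i)" if "i \<in> I" for i
    using square_integrable_imp_integrable[OF _ sq[OF that]] that by simp
  have uncorrelated: "expectation (\<lambda>x. X i x * X j x) = 0"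
    if "i \<in> I" "j \<in> I" "i \<noteq> j" for i j
    using indep_var_lebesgue_integral[OF indep[OF that] integrable integrable] centered that by simp
  have "expectation (\<lambda>x. (\<Sum>i\<in>I. X i x) ^ 2) = expectation (\<lambda>x. \<Sum>i\<in>I. \<Sum>j\<in>I. X i x * X j x)"
    by (simp add: power2_eq_square sum_product)
  also have "\<dots> = (\<Sum>i\<in>I. \<Sum>j\<in>I. expectation (\<lambda>x. X i x * X j x))"
    using products_integrable by (simp add: Bochner_Integration.integral_sum)
  also have "\<dots> = (\<Sum>i\<in>I. expectation (\<lambda>x. X i x * X i x))"
  proof (intro sum.cong refl)
    fix i assume "i \<in> I"
    then show "(\<Sum>j\<in>I. expectation (\<lambda>x. X i x * X j x)) = expectation (\<lambda>x. X i x * X i x)"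
      by (auto simp: sum.remove[OF \<open>finite I\<close> \<open>i \<in> I\<close>] intro!: sum.neutral uncorrelated)
  qed
  finally show ?thesis by (simp only: power2_eq_square)
qed

lemma indep_vars_imp_indep_var:
  assumes "indep_vars M' X I" "i \<in> I" "j \<in> I" "i \<noteq> j"
  shows "indep_var (M' i) (X i) (M' j) (X j)"
proof -
  have "indep_var (PiM {i} M') (\<lambda>\<omega>. restrict (\<lambda>k. X k \<omega>) {i})
      (PiM {j} M') (\<lambda>\<omega>. restrict (\<lambda>k. X k \<omega>) {j})"
    using assms by (intro indep_var_restrict) auto
  from indep_var_compose[OF this measurable_component_singleton measurable_component_singleton]
  show ?thesis by (simp add: comp_def)
qed

lemma indep_var_Inl_Inr_blocks:
  assumes "indep_vars M' (\<lambda>k. case k of Inl i \<Rightarrow> X i | Inr j \<Rightarrow> Y j) (Inl ` I \<union> Inr ` J)"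
    and f: "f \<in> PiM I (M' \<circ> Inl) \<rightarrow>\<^sub>M N1" and g: "g \<in> PiM J (M' \<circ> Inr) \<rightarrow>\<^sub>M N2"
  shows "indep_var N1 (\<lambda>\<omega>. f (\<lambda>i\<in>I. X i \<omega>)) N2 (\<lambda>\<omega>. g (\<lambda>j\<in>J. Y j \<omega>))"
proof -
  let ?W = "\<lambda>k. case k of Inl i \<Rightarrow> X i | Inr j \<Rightarrow> Y j"
  have "indep_var (PiM (Inl ` I) M') (\<lambda>\<omega>. restrict (\<lambda>k. ?W k \<omega>) (Inl ` I))
      (PiM (Inr ` J) M') (\<lambda>\<omega>. restrict (\<lambda>k. ?W k \<omega>) (Inr ` J))"
    using assms(1) by (rule indep_var_restrict) auto
  moreover have "(\<lambda>w. f (\<lambda>i\<in>I. w (Inl i))) \<in> PiM (Inl ` I) M' \<rightarrow>\<^sub>M N1"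
    by (rule measurable_compose[OF _ f]) (auto intro!: measurable_restrict measurable_component_singleton)
  moreover have "(\<lambda>w. g (\<lambda>j\<in>J. w (Inr j))) \<in> PiM (Inr ` J) M' \<rightarrow>\<^sub>M N2"
    by (rule measurable_compose[OF _ g]) (auto intro!: measurable_restrict measurable_component_singleton)
  ultimately have "indep_var
      N1 ((\<lambda>w. f (\<lambda>i\<in>I. w (Inl i))) \<circ> (\<lambda>\<omega>. restrict (\<lambda>k. ?W k \<omega>) (Inl ` I)))
      N2 ((\<lambda>w. g (\<lambda>j\<in>J. w (Inr j))) \<circ> (\<lambda>\<omega>. restrict (\<lambda>k. ?W k \<omega>) (Inr ` J)))"
    by (rule indep_var_compose)
  moreover have "(\<lambda>i\<in>I. restrict (\<lambda>k. ?W k \<omega>) (Inl ` I) (Inl i)) = (\<lambda>i\<in>I. X i \<omega>)"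
    and "(\<lambda>j\<in>J. restrict (\<lambda>k. ?W k \<omega>) (Inr ` J) (Inr j)) = (\<lambda>j\<in>J. Y j \<omega>)" for \<omega>
    by (auto simp: fun_eq_iff)
  ultimately show ?thesis by (simp add: comp_def)
qed

lemma indep_vars_Inl_Inr_components:
  assumes indep: "indep_vars (\<lambda>_. borel) (\<lambda>k. case k of Inl i \<Rightarrow> X i | Inr j \<Rightarrow> Y j) (Inl ` I \<union> Inr ` J)"
  shows "\<And>i. i \<in> I \<Longrightarrow> X i \<in> borel_measurable M"
    and "\<And>j. j \<in> J \<Longrightarrow> Y j \<in> borel_measurable M"
    and "\<And>i i'. i \<in> I \<Longrightarrow> i' \<in> I \<Longrightarrow> i \<noteq> i' \<Longrightarrow> indep_var borel (X i) borel (X i')"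
    and "\<And>j j'. j \<in> J \<Longrightarrow> j' \<in> J \<Longrightarrow> j \<noteq> j' \<Longrightarrow> indep_var borel (Y j) borel (Y j')"
proof -
  have rv: "random_variable borel (case k of Inl i \<Rightarrow> X i | Inr j \<Rightarrow> Y j)" if "k \<in> Inl ` I \<union> Inr ` J" for k
    using indep that unfolding indep_vars_def by blast
  show "X i \<in> borel_measurable M" if "i \<in> I" for i
    using rv[of "Inl i"] that by simp
  show "Y j \<in> borel_measurable M" if "j \<in> J" for j
    using rv[of "Inr j"] that by simp
  show "indep_var borel (X i) borel (X i')" if "i \<in> I" "i' \<in> I" "i \<noteq> i'" for i i'
    using indep_vars_imp_indep_var[OF indep, of "Inl i" "Inl i'"] that by simp
  show "indep_var borel (Y j) borel (Y j')" if "j \<in> J" "j' \<in> J" "j \<noteq> j'" for j j'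
    using indep_vars_imp_indep_var[OF indep, of "Inr j" "Inr j'"] that by simp
qed

lemma variance_add_mult_indep:
  fixes A S T :: "'a \<Rightarrow> real"
  assumes [measurable]: "A \<in> borel_measurable M" "S \<in> borel_measurable M" "T \<in> borel_measurable M"
    and sq: "integrable M (\<lambda>\<omega>. A \<omega> ^ 2)" "integrable M (\<lambda>\<omega>. S \<omega> ^ 2)" "integrable M (\<lambda>\<omega>. T \<omega> ^ 2)"
    \<comment> \<open>the dummy coordinate 0 is only there because indep_var needs a common codomain\<close>
    and indep: "indep_var borel (\<lambda>\<omega>. (A \<omega>, S \<omega>)) borel (\<lambda>\<omega>. (T \<omega>, 0 :: real))"
    and centered: "expectation T = 0"
  shows "variance (\<lambda>\<omega>. A \<omega> + S \<omega> * T \<omega>) =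
    variance A + expectation (\<lambda>\<omega>. S \<omega> ^ 2) * expectation (\<lambda>\<omega>. T \<omega> ^ 2)"
proof -
  define a where "a = expectation A"
  have indep_fun: "indep_var borel (\<lambda>\<omega>. \<phi> (A \<omega>) (S \<omega>)) borel (\<lambda>\<omega>. \<psi> (T \<omega>))"
    if "(\<lambda>z. \<phi> (fst z) (snd z)) \<in> borel_measurable (borel \<Otimes>\<^sub>M borel)" "\<psi> \<in> borel_measurable borel"
    for \<phi> :: "real \<Rightarrow> real \<Rightarrow> real" and \<psi> :: "real \<Rightarrow> real"
  proof -
    have "(\<lambda>z. \<psi> (fst z)) \<in> borel_measurable (borel \<Otimes>\<^sub>M (borel :: real measure))"
      by (rule measurable_fst''[OF that(2)])
    from indep_var_compose[OF indep that(1)[unfolded borel_prod] this[unfolded borel_prod]]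
    show ?thesis by (simp add: comp_def)
  qed
  have AS_T: "indep_var borel (\<lambda>\<omega>. (A \<omega> - a) * S \<omega>) borel (\<lambda>\<omega>. T \<omega>)"
    by (rule indep_fun[of "\<lambda>x y. (x - a) * y" "\<lambda>t. t"]) measurable
  have S_T: "indep_var borel (\<lambda>\<omega>. S \<omega>) borel (\<lambda>\<omega>. T \<omega>)"
    by (rule indep_fun[of "\<lambda>x y. y" "\<lambda>t. t"]) measurable
  have S2_T2: "indep_var borel (\<lambda>\<omega>. S \<omega> ^ 2) borel (\<lambda>\<omega>. T \<omega> ^ 2)"
    by (rule indep_fun[of "\<lambda>x y. y ^ 2" "\<lambda>t. t ^ 2"]) measurable
  have [simp]: "integrable M A" "integrable M S" "integrable M T"
    using assms(1-3) sq by (simp_all only: square_integrable_imp_integrable)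
  have AS: "integrable M (\<lambda>\<omega>. (A \<omega> - a) * S \<omega>)"
    using sq integrable_mult_of_square_integrable[of A M S]
    by (simp add: left_diff_distrib)
  have "expectation (\<lambda>\<omega>. S \<omega> * T \<omega>) = 0"
    using indep_var_lebesgue_integral[OF S_T] centered by simp
  then have mean: "expectation (\<lambda>\<omega>. A \<omega> + S \<omega> * T \<omega>) = a"
    using indep_var_integrable[OF S_T] by (simp add: a_def)
  have "expectation (\<lambda>\<omega>. (A \<omega> - a) * S \<omega> * T \<omega>) = 0"
    using indep_var_lebesgue_integral[OF AS_T AS] centered by simp
  moreover have "expectation (\<lambda>\<omega>. S \<omega> ^ 2 * T \<omega> ^ 2) =
      expectation (\<lambda>\<omega>. S \<omega> ^ 2) * expectation (\<lambda>\<omega>. T \<omega> ^ 2)"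
    using indep_var_lebesgue_integral[OF S2_T2 sq(2,3)] .
  moreover have "(\<lambda>\<omega>. (A \<omega> + S \<omega> * T \<omega> - a) ^ 2) =
      (\<lambda>\<omega>. (A \<omega> - a) ^ 2 + 2 * ((A \<omega> - a) * S \<omega> * T \<omega>) + S \<omega> ^ 2 * T \<omega> ^ 2)"
    by (simp add: fun_eq_iff power2_eq_square algebra_simps)
  moreover have "integrable M (\<lambda>\<omega>. (A \<omega> - a) ^ 2)"
    using sq by (simp add: power2_diff)
  ultimately show ?thesis
    using indep_var_integrable[OF AS_T AS] indep_var_integrable[OF S2_T2 sq(2,3)]
    by (simp add: mean a_def)
qed

lemma normal_distributed_moments:
  assumes "\<sigma> > 0" and D: "distributed M lborel X (normal_density \<mu> \<sigma>)"
  shows "X \<in> borel_measurable M" "integrable M (\<lambda>x. X x ^ 2)"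
    "expectation X = \<mu>" "variance X = \<sigma>\<^sup>2"
proof -
  show "X \<in> borel_measurable M"
    using distributed_measurable[OF D] by simp
  have "integrable lborel (\<lambda>x. normal_density \<mu> \<sigma> x * (x - \<mu>) ^ 2
      + 2 * \<mu> * (normal_density \<mu> \<sigma> x * x) - \<mu>\<^sup>2 * normal_density \<mu> \<sigma> x)"
    using integrable_normal_moment[OF assms(1), of \<mu> 2] integrable_normal_moment_nz_1[OF assms(1), of \<mu>]
      integrable_normal_density[OF assms(1), of \<mu>]
    by (intro Bochner_Integration.integrable_diff Bochner_Integration.integrable_add
        Bochner_Integration.integrable_mult_right)
  moreover have "(\<lambda>x. normal_density \<mu> \<sigma> x * x ^ 2) = (\<lambda>x. normal_density \<mu> \<sigma> x * (x - \<mu>) ^ 2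
      + 2 * \<mu> * (normal_density \<mu> \<sigma> x * x) - \<mu>\<^sup>2 * normal_density \<mu> \<sigma> x)"
    by (simp add: fun_eq_iff power2_eq_square algebra_simps)
  ultimately have "integrable lborel (\<lambda>x. normal_density \<mu> \<sigma> x * x ^ 2)"
    by simp
  then show "integrable M (\<lambda>x. X x ^ 2)"
    using distributed_integrable[OF D, of "\<lambda>x. x ^ 2"] by simp
  show "expectation X = \<mu>" "variance X = \<sigma>\<^sup>2"
    using normal_distributed_expectation[OF assms] normal_distributed_variance[OF assms] .
qed

lemma ybar_obs_CSS_moments:
  fixes Y :: "nat \<Rightarrow> 'a \<Rightarrow> real"
  assumes "n > 0"
    and meas: "\<And>i. i \<in> {1..n} \<Longrightarrow> Y i \<in> borel_measurable M"
    and sq: "\<And>i. i \<in> {1..n} \<Longrightarrow> integrable M (\<lambda>\<omega>. Y i \<omega> ^ 2)"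
    and mean: "\<And>i. i \<in> {1..n} \<Longrightarrow> expectation (Y i) = \<mu>"
    and var: "\<And>i. i \<in> {1..n} \<Longrightarrow> variance (Y i) = \<sigma>\<^sup>2"
    and indep: "\<And>i j. i \<in> {1..n} \<Longrightarrow> j \<in> {1..n} \<Longrightarrow> i \<noteq> j \<Longrightarrow> indep_var borel (Y i) borel (Y j)"
  shows "integrable M (\<lambda>\<omega>. ybar_obs n Y \<omega> ^ 2)" "variance (ybar_obs n Y) = \<sigma>\<^sup>2 / n"
    "integrable M (CSS n Y)" "expectation (CSS n Y) = (real n - 1) * \<sigma>\<^sup>2"
proof -
  define U where "U i \<omega> = Y i \<omega> - \<mu>" for i \<omega>
  define SU where "SU \<omega> = (\<Sum>i=1..n. U i \<omega>)" for \<omega>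
  have U_meas: "U i \<in> borel_measurable M" if "i \<in> {1..n}" for i
    unfolding U_def[abs_def] using meas[OF that] by simp
  have Y_int: "integrable M (Y i)" if "i \<in> {1..n}" for i
    by (rule square_integrable_imp_integrable[OF meas[OF that] sq[OF that]])
  have U_sq: "integrable M (\<lambda>\<omega>. U i \<omega> ^ 2)" if "i \<in> {1..n}" for i
    using sq[OF that] Y_int[OF that] by (simp add: U_def power2_diff)
  have U_int: "integrable M (U i)" if "i \<in> {1..n}" for i
    by (rule square_integrable_imp_integrable[OF U_meas[OF that] U_sq[OF that]])
  have U_mean: "expectation (U i) = 0" if "i \<in> {1..n}" for i
    using Y_int[OF that] mean[OF that] by (simp add: U_def[abs_def] prob_space)
  have U_var: "expectation (\<lambda>\<omega>. U i \<omega> ^ 2) = \<sigma>\<^sup>2" if "i \<in> {1..n}" for i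
    using var[OF that] mean[OF that] by (simp add: U_def)
  have U_indep: "indep_var borel (U i) borel (U j)" if "i \<in> {1..n}" "j \<in> {1..n}" "i \<noteq> j" for i j
    using indep_var_compose[OF indep[OF that], of "\<lambda>x. x - \<mu>" borel "\<lambda>x. x - \<mu>" borel]
    by (simp add: comp_def U_def[abs_def])
  have SU_meas: "SU \<in> borel_measurable M"
    unfolding SU_def[abs_def] using U_meas by (rule borel_measurable_sum)
  have SU_sq: "integrable M (\<lambda>\<omega>. SU \<omega> ^ 2)"
    unfolding SU_def using U_meas U_sq by (rule integrable_square_sum)
  have SU_sq_mean: "expectation (\<lambda>\<omega>. SU \<omega> ^ 2) = real n * \<sigma>\<^sup>2"
  proof -
    have "expectation (\<lambda>\<omega>. SU \<omega> ^ 2) = (\<Sum>i=1..n. expectation (\<lambda>\<omega>. U i \<omega> ^ 2))"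
      unfolding SU_def
      by (rule expectation_square_sum_indep[of "{1..n}" U, OF _ U_meas U_sq U_mean U_indep]) auto
    then show ?thesis using U_var by simp
  qed
  have SU_mean: "expectation SU = 0"
    unfolding SU_def[abs_def] using U_int U_mean by (simp add: Bochner_Integration.integral_sum)
  have ybar: "ybar_obs n Y = (\<lambda>\<omega>. \<mu> + SU \<omega> / n)"
    using ybar_obs_minus[OF \<open>n > 0\<close>, of Y _ \<mu>] by (auto simp: fun_eq_iff SU_def U_def algebra_simps)
  have CSS: "CSS n Y = (\<lambda>\<omega>. (\<Sum>i=1..n. U i \<omega> ^ 2) - SU \<omega> ^ 2 / n)"
    using CSS_eq_centered[OF \<open>n > 0\<close>, of Y _ \<mu>] by (simp add: fun_eq_iff SU_def U_def)
  have SU_int: "integrable M SU"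
    by (rule square_integrable_imp_integrable[OF SU_meas SU_sq])
  show "integrable M (\<lambda>\<omega>. ybar_obs n Y \<omega> ^ 2)"
    using SU_sq SU_int by (simp add: ybar power2_sum power_divide)
  have "expectation (ybar_obs n Y) = \<mu>"
    using SU_int SU_mean by (simp add: ybar prob_space)
  then have "variance (ybar_obs n Y) = expectation (\<lambda>\<omega>. SU \<omega> ^ 2) / (real n)\<^sup>2"
    using SU_sq by (simp add: ybar power_divide)
  then show "variance (ybar_obs n Y) = \<sigma>\<^sup>2 / n"
    using \<open>n > 0\<close> unfolding SU_sq_mean by (simp add: power2_eq_square)
  have sum_U_sq: "integrable M (\<lambda>\<omega>. \<Sum>i=1..n. U i \<omega> ^ 2)"
    using U_sq by (rule Bochner_Integration.integrable_sum)
  show "integrable M (CSS n Y)"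
    unfolding CSS using sum_U_sq SU_sq by simp
  have "expectation (\<lambda>\<omega>. \<Sum>i=1..n. U i \<omega> ^ 2) = (\<Sum>i=1..n. expectation (\<lambda>\<omega>. U i \<omega> ^ 2))"
    using U_sq by (rule Bochner_Integration.integral_sum)
  also have "\<dots> = real n * \<sigma>\<^sup>2"
    using U_var by simp
  finally have "expectation (CSS n Y) = real n * \<sigma>\<^sup>2 - real n * \<sigma>\<^sup>2 / n"
    unfolding CSS using sum_U_sq SU_sq SU_sq_mean by simp
  then show "expectation (CSS n Y) = (real n - 1) * \<sigma>\<^sup>2"
    using \<open>n > 0\<close> by (simp add: field_simps)
qed

lemma sum_standardized_indep_moments:
  fixes X :: "'i \<Rightarrow> 'a \<Rightarrow> real"
  assumes "finite I" and meas: "\<And>i. i \<in> I \<Longrightarrow> X i \<in> borel_measurable M"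
    and sq: "\<And>i. i \<in> I \<Longrightarrow> integrable M (\<lambda>\<omega>. X i \<omega> ^ 2)"
    and mean: "\<And>i. i \<in> I \<Longrightarrow> expectation (X i) = 0"
    and var: "\<And>i. i \<in> I \<Longrightarrow> variance (X i) = 1"
    and indep: "\<And>i j. i \<in> I \<Longrightarrow> j \<in> I \<Longrightarrow> i \<noteq> j \<Longrightarrow> indep_var borel (X i) borel (X j)"
  shows "integrable M (\<lambda>\<omega>. (\<Sum>i\<in>I. X i \<omega>) ^ 2)" "expectation (\<lambda>\<omega>. \<Sum>i\<in>I. X i \<omega>) = 0"
    "expectation (\<lambda>\<omega>. (\<Sum>i\<in>I. X i \<omega>) ^ 2) = card I"
proof -
  show "integrable M (\<lambda>\<omega>. (\<Sum>i\<in>I. X i \<omega>) ^ 2)"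
    using meas sq by (rule integrable_square_sum)
  show "expectation (\<lambda>\<omega>. \<Sum>i\<in>I. X i \<omega>) = 0"
    using mean square_integrable_imp_integrable[OF meas sq] by (simp add: Bochner_Integration.integral_sum)
  have "expectation (\<lambda>\<omega>. (\<Sum>i\<in>I. X i \<omega>) ^ 2) = (\<Sum>i\<in>I. expectation (\<lambda>\<omega>. X i \<omega> ^ 2))"
    using assms(1) meas sq mean indep by (rule expectation_square_sum_indep)
  also have "\<dots> = card I"
    using var mean by simp
  finally show "expectation (\<lambda>\<omega>. (\<Sum>i\<in>I. X i \<omega>) ^ 2) = card I" .
qed

lemma indep_var_sample_statistics_noise:
  fixes Y :: "nat \<Rightarrow> 'a \<Rightarrow> real" and Z :: "'j \<Rightarrow> 'a \<Rightarrow> real"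
  assumes "indep_vars (\<lambda>_. borel) (\<lambda>k. case k of Inl i \<Rightarrow> Y i | Inr p \<Rightarrow> Z p) (Inl ` {1..n} \<union> Inr ` J)"
  shows "indep_var borel (\<lambda>\<omega>. (ybar_obs n Y \<omega>, sqrt (sigma2_hat_obs_M n c Y \<omega>) / a))
    borel (\<lambda>\<omega>. (\<Sum>p\<in>J. Z p \<omega>, 0 :: real))"
proof -
  define f where "f x = (ybar_obs n (\<lambda>i x. x i) x, sqrt (sigma2_hat_obs_M n c (\<lambda>i x. x i) x) / a)"
    for x :: "nat \<Rightarrow> real"
  define g where "g x = (\<Sum>p\<in>J. x p, 0 :: real)" for x :: "'j \<Rightarrow> real"
  have "(\<lambda>x. x i) \<in> borel_measurable (PiM {1..n} (\<lambda>_. borel))" if "i \<in> {1..n}" for i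
    using that by (rule measurable_component_singleton)
  then have "f \<in> borel_measurable (PiM {1..n} (\<lambda>_. borel))"
    using borel_measurable_sample_statistics[of n "\<lambda>i x. x i" "PiM {1..n} (\<lambda>_. borel)"]
    unfolding f_def borel_prod[symmetric]
    by (intro measurable_Pair borel_measurable_divide borel_measurable_sqrt) auto
  moreover have "g \<in> borel_measurable (PiM J (\<lambda>_. borel))"
    unfolding g_def borel_prod[symmetric]
    by (intro measurable_Pair borel_measurable_sum measurable_component_singleton) auto
  ultimately have "indep_var borel (\<lambda>\<omega>. f (\<lambda>i\<in>{1..n}. Y i \<omega>)) borel (\<lambda>\<omega>. g (\<lambda>p\<in>J. Z p \<omega>))"
    using assms by (intro indep_var_Inl_Inr_blocks) (auto simp: comp_def)
  moreover have "f (\<lambda>i\<in>{1..n}. Y i \<omega>) = (ybar_obs n Y \<omega>, sqrt (sigma2_hat_obs_M n c Y \<omega>) / a)" for \<omega>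
    using sample_statistics_cong[of n "\<lambda>i x. x i" "\<lambda>i\<in>{1..n}. Y i \<omega>" Y \<omega>]
    unfolding f_def by simp
  moreover have "g (\<lambda>p\<in>J. Z p \<omega>) = (\<Sum>p\<in>J. Z p \<omega>, 0)" for \<omega>
    unfolding g_def by simp
  ultimately show ?thesis by simp
qed

lemma variance_mu_MI_M:
  fixes Y :: "nat \<Rightarrow> 'a \<Rightarrow> real" and Z :: "nat \<times> nat \<Rightarrow> 'a \<Rightarrow> real"
  assumes "n_obs > 0" "D > 0" "real n_obs - 1 + c_M > 0"
    and indep: "indep_vars (\<lambda>_. borel) (\<lambda>k. case k of Inl i \<Rightarrow> Y i | Inr p \<Rightarrow> Z p)
      (Inl ` {1..n_obs} \<union> Inr ` ({n_obs+1..n_obs+n_mis} \<times> {1..D}))"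
    and Y_sq: "\<And>i. i \<in> {1..n_obs} \<Longrightarrow> integrable M (\<lambda>\<omega>. Y i \<omega> ^ 2)"
    and Y_mean: "\<And>i. i \<in> {1..n_obs} \<Longrightarrow> expectation (Y i) = \<mu>"
    and Y_var: "\<And>i. i \<in> {1..n_obs} \<Longrightarrow> variance (Y i) = \<sigma>\<^sup>2"
    and Z_sq: "\<And>p. p \<in> {n_obs+1..n_obs+n_mis} \<times> {1..D} \<Longrightarrow> integrable M (\<lambda>\<omega>. Z p \<omega> ^ 2)"
    and Z_mean: "\<And>p. p \<in> {n_obs+1..n_obs+n_mis} \<times> {1..D} \<Longrightarrow> expectation (Z p) = 0"
    and Z_var: "\<And>p. p \<in> {n_obs+1..n_obs+n_mis} \<times> {1..D} \<Longrightarrow> variance (Z p) = 1"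
  shows "variance (mu_MI_M n_obs n_mis D c_M Y Z) =
    \<sigma>^2 * (1 / real n_obs + real n_mis * (real n_obs - 1) /
       (real D * (real (n_obs + n_mis))^2 * (c_M + real n_obs - 1)))"
proof -
  define I where "I = {1..n_obs}"
  define J where "J = {n_obs+1..n_obs+n_mis} \<times> {1..D}"
  define N where "N = real (n_obs + n_mis)"
  define c where "c = N * real D"
  define k where "k = c_M + real n_obs - 1"
  define S where "S \<omega> = sqrt (sigma2_hat_obs_M n_obs c_M Y \<omega>) / c" for \<omega>
  define T where "T \<omega> = (\<Sum>p\<in>J. Z p \<omega>)" for \<omega>
  have "N > 0" "real D > 0" "k > 0" using assms(1-3) by (simp_all add: N_def k_def)
  note components = indep_vars_Inl_Inr_components[OF indep, folded I_def J_def]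
  have "finite J" by (simp add: J_def)
  note sample = ybar_obs_CSS_moments[where Y = Y and n = n_obs,
      OF assms(1) components(1)[unfolded I_def] Y_sq Y_mean Y_var components(3)[unfolded I_def]]
  note noise = sum_standardized_indep_moments[where X = Z and I = J, folded T_def,
      OF \<open>finite J\<close> components(2) Z_sq[folded J_def] Z_mean[folded J_def] Z_var[folded J_def] components(4)]
  have S_sq: "S \<omega> ^ 2 = CSS n_obs Y \<omega> / (k * c\<^sup>2)" for \<omega>
  proof -
    have "CSS n_obs Y \<omega> \<ge> 0" by (simp add: CSS_def sum_nonneg)
    then show ?thesis
      using \<open>k > 0\<close> by (simp add: S_def sigma2_hat_obs_M_def k_def power_divide algebra_simps)
  qed
  have "mu_MI_M n_obs n_mis D c_M Y Z = (\<lambda>\<omega>. ybar_obs n_obs Y \<omega> + S \<omega> * T \<omega>)"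
    by (rule ext) (simp only: mu_MI_M_eq[OF assms(1,2)] S_def T_def J_def c_def N_def)
  moreover have "indep_var borel (\<lambda>\<omega>. (ybar_obs n_obs Y \<omega>, S \<omega>)) borel (\<lambda>\<omega>. (T \<omega>, 0 :: real))"
    using indep_var_sample_statistics_noise[OF indep] unfolding S_def T_def J_def .
  moreover have "S \<in> borel_measurable M" "ybar_obs n_obs Y \<in> borel_measurable M"
    using borel_measurable_sample_statistics[of n_obs Y M] components(1)
    unfolding S_def[abs_def] I_def by simp_all
  moreover have "T \<in> borel_measurable M"
    unfolding T_def[abs_def] using components(2) by (rule borel_measurable_sum)
  moreover have "integrable M (\<lambda>\<omega>. S \<omega> ^ 2)"
    using sample(3) by (simp add: S_sq)
  ultimately have "variance (mu_MI_M n_obs n_mis D c_M Y Z) =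
      variance (ybar_obs n_obs Y) + expectation (\<lambda>\<omega>. S \<omega> ^ 2) * expectation (\<lambda>\<omega>. T \<omega> ^ 2)"
    using variance_add_mult_indep[of "ybar_obs n_obs Y" S T] sample(1) noise(1,2) by simp
  also have "\<dots> = \<sigma>\<^sup>2 / n_obs + (real n_obs - 1) * \<sigma>\<^sup>2 / (k * c\<^sup>2) * card J"
    using sample(2,4) noise(3) by (simp add: S_sq)
  also have "\<dots> = \<sigma>^2 * (1 / real n_obs + real n_mis * (real n_obs - 1) / (real D * N^2 * k))"
    using \<open>N > 0\<close> \<open>real D > 0\<close> \<open>k > 0\<close> by (simp add: J_def c_def field_simps power2_eq_square)
  finally show ?thesis unfolding N_def k_def .
qed

end

theorem mainTheorem4:
  fixes M :: "'a measure"
    and Y :: "nat \<Rightarrow> 'a \<Rightarrow> real" and Z :: "nat \<times> nat \<Rightarrow> 'a \<Rightarrow> real"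
    and n_obs n_mis D :: nat and \<mu> \<sigma> c_M :: real
  assumes "prob_space M"
    and "n_obs \<ge> 2" and "n_mis \<ge> 1" and "D \<ge> 1"
    and "\<sigma> > 0"
    and "real n_obs - 1 + c_M > 0"
    and "prob_space.indep_vars M (\<lambda>_. borel)
           (\<lambda>k. case k of Inl i \<Rightarrow> Y i | Inr p \<Rightarrow> Z p)
           (Inl ` {1..n_obs} \<union> Inr ` ({n_obs+1..n_obs+n_mis} \<times> {1..D}))"
    and "\<And>i. i \<in> {1..n_obs} \<Longrightarrow> distributed M lborel (Y i) (normal_density \<mu> \<sigma>)"
    and "\<And>i d. i \<in> {n_obs+1..n_obs+n_mis} \<Longrightarrow> d \<in> {1..D} \<Longrightarrow>
           distributed M lborel (Z (i, d)) (normal_density 0 1)"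
  shows "prob_space.variance M (mu_MI_M n_obs n_mis D c_M Y Z) =
    \<sigma>^2 * (1 / real n_obs + real n_mis * (real n_obs - 1) /
       (real D * (real (n_obs + n_mis))^2 * (c_M + real n_obs - 1)))"
proof -
  interpret prob_space M by fact
  have Z: "distributed M lborel (Z p) (normal_density 0 1)"
    if "p \<in> {n_obs+1..n_obs+n_mis} \<times> {1..D}" for p
    using assms(9) that by (cases p) auto
  show ?thesis
    using assms(2,4,6,7) normal_distributed_moments[OF assms(5) assms(8)]
      normal_distributed_moments[OF zero_less_one Z]
    by (intro variance_mu_MI_M[where \<mu> = \<mu> and \<sigma> = \<sigma>]) auto
qed

end
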